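(* Let $q=p^e$ with $p$ prime, let $a\in\mathbb{F}_q^*$, and let $f(x)=(x-a)^k\in\mathbb{F}_q[x]$ with $k\ge1$. Then every $f$-subgroup $M$ (in the multiplicative group of any extension field of $\mathbb{F}_q$) equals $\langle a\rangle$, and $M$ is standard: every $f$-sequence presenting $M$ is cyclic with $s_{n+1}=a s_n$ for all $n\in\mathbb{Z}$.
   Context: An $f$-sequence is a two-way infinite sequence $(s_n)_{n\in\mathbb{Z}}$ with $f(\sigma)s=0$, where $(\sigma s)_n=s_{n+1}$. A sequence $s$ presents a finite multiplicative subgroup $M$ if $s$ has smallest period $|M|$ and $M=\{s_0,\ldots,s_{|M|-1}\}$; $M$ is an $f$-subgroup if some $f$-sequence presents it. A sequence is cyclic if $s_{n+1}/s_n$ is a constant. An $f$-subgroup is standard if every $f$-sequence presenting it is cyclic. *)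

theory Defs
  imports "HOL-Computational_Algebra.Polynomial"
begin

text \<open>Applying the polynomial f to the shift operator: (f(sigma) s)_n = sum_i f_i s_(n+i).\<close>
definition f_sequence :: "'a::comm_ring_1 poly \<Rightarrow> (int \<Rightarrow> 'a) \<Rightarrow> bool" where
  "f_sequence f s \<longleftrightarrow> (\<forall>n::int. (\<Sum>i\<le>degree f. coeff f i * s (n + int i)) = 0)"

definition finite_mult_subgroup :: "'a::field set \<Rightarrow> bool" where
  "finite_mult_subgroup M \<longleftrightarrow> finite M \<and> 0 \<notin> M \<and> 1 \<in> M \<and>
     (\<forall>x\<in>M. \<forall>y\<in>M. x * y \<in> M) \<and> (\<forall>x\<in>M. inverse x \<in> M)"

definition has_period :: "(int \<Rightarrow> 'a) \<Rightarrow> nat \<Rightarrow> bool" where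
  "has_period s d \<longleftrightarrow> (\<forall>n::int. s (n + int d) = s n)"

definition smallest_period :: "(int \<Rightarrow> 'a) \<Rightarrow> nat \<Rightarrow> bool" where
  "smallest_period s d \<longleftrightarrow> 0 < d \<and> has_period s d \<and> (\<forall>d'. 0 < d' \<and> d' < d \<longrightarrow> \<not> has_period s d')"

definition presents :: "(int \<Rightarrow> 'a::field) \<Rightarrow> 'a set \<Rightarrow> bool" where
  "presents s M \<longleftrightarrow> finite_mult_subgroup M \<and> smallest_period s (card M) \<and>
     M = s ` {0..<int (card M)}"

definition f_subgroup :: "'a::field poly \<Rightarrow> 'a set \<Rightarrow> bool" where
  "f_subgroup f M \<longleftrightarrow> (\<exists>s. f_sequence f s \<and> presents s M)"

definition cyclic_seq :: "(int \<Rightarrow> 'a::field) \<Rightarrow> bool" where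
  "cyclic_seq s \<longleftrightarrow> (\<exists>c. \<forall>n::int. s (n + 1) = c * s n)"

definition standard_f_subgroup :: "'a::field poly \<Rightarrow> 'a set \<Rightarrow> bool" where
  "standard_f_subgroup f M \<longleftrightarrow> f_subgroup f M \<and>
     (\<forall>s. f_sequence f s \<and> presents s M \<longrightarrow> cyclic_seq s)"

definition is_subfield :: "'a::field set \<Rightarrow> bool" where
  "is_subfield F \<longleftrightarrow> 0 \<in> F \<and> 1 \<in> F \<and> (\<forall>x\<in>F. \<forall>y\<in>F. x + y \<in> F \<and> x * y \<in> F) \<and>
     (\<forall>x\<in>F. - x \<in> F \<and> inverse x \<in> F)"

end

theory Submission
  imports Defs "HOL-Computational_Algebra.Primes" "HOL-Library.Function_Algebras"
begin

text \<open>
  Applying f = (x - a)^k to the shift gives \<Delta>^k, where \<Delta> s = \<sigma> s - a s. For an N-periodic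
  t with \<Delta>(\<Delta> t) = 0, put r = \<Delta> t: then r (n + m) = a^m r n and
  a t (n + m) = a^(m+1) t n + m a^m r n, so periodicity gives a^N r n = r n and then N r n = 0.
  For a sequence presenting M we have N = |M|, which is nonzero in the field: if the
  characteristic p divided |M|, the Frobenius map would make every element of M a root of
  x^(|M|/p) - 1. Hence \<Delta> s = 0, i.e. s (n + 1) = a s n, and M, the range of s, contains 1
  and is therefore the group generated by a.
\<close>

definition poly_shift :: "'a::comm_ring_1 poly \<Rightarrow> (int \<Rightarrow> 'a) \<Rightarrow> int \<Rightarrow> 'a" where
  "poly_shift g s = (\<lambda>n. \<Sum>i\<le>degree g. coeff g i * s (n + int i))"

definition shift_diff :: "'a::comm_ring_1 \<Rightarrow> (int \<Rightarrow> 'a) \<Rightarrow> int \<Rightarrow> 'a" where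
  "shift_diff a s = (\<lambda>n. s (n + 1) - a * s n)"

lemma f_sequence_iff_poly_shift: "f_sequence g s \<longleftrightarrow> poly_shift g s = 0"
  by (auto simp: f_sequence_def poly_shift_def fun_eq_iff)

lemma poly_shift_eq_sum:
  assumes "degree g \<le> m"
  shows "poly_shift g s n = (\<Sum>i\<le>m. coeff g i * s (n + int i))"
  unfolding poly_shift_def
  by (rule sum.mono_neutral_left) (use assms in \<open>auto simp: coeff_eq_0\<close>)

lemma poly_shift_0 [simp]: "poly_shift 0 s = 0"
  by (simp add: poly_shift_def fun_eq_iff)

lemma poly_shift_add: "poly_shift (g + h) s = poly_shift g s + poly_shift h s"
proof
  fix n
  define m where "m = max (degree g) (degree h)"
  have "degree (g + h) \<le> m" "degree g \<le> m" "degree h \<le> m"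
    by (auto simp: m_def intro: degree_add_le)
  then show "poly_shift (g + h) s n = (poly_shift g s + poly_shift h s) n"
    by (simp add: poly_shift_eq_sum distrib_right sum.distrib)
qed

lemma poly_shift_smult: "poly_shift (smult c g) s = (\<lambda>n. c * poly_shift g s n)"
proof
  fix n
  have "poly_shift (smult c g) s n = (\<Sum>i\<le>degree g. coeff (smult c g) i * s (n + int i))"
    by (rule poly_shift_eq_sum) (rule degree_smult_le)
  then show "poly_shift (smult c g) s n = c * poly_shift g s n"
    by (simp add: poly_shift_def sum_distrib_left mult.assoc)
qed

lemma poly_shift_pCons:
  "poly_shift (pCons c g) s = (\<lambda>n. c * s n + poly_shift g s (n + 1))"
proof
  fix n
  have "poly_shift (pCons c g) s n
      = (\<Sum>i\<le>Suc (degree g). coeff (pCons c g) i * s (n + int i))"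
    by (rule poly_shift_eq_sum) (rule degree_pCons_le)
  also have "\<dots> = c * s n + (\<Sum>i\<le>degree g. coeff g i * s (n + 1 + int i))"
    by (subst sum.atMost_Suc_shift) (simp add: ac_simps)
  finally show "poly_shift (pCons c g) s n = c * s n + poly_shift g s (n + 1)"
    by (simp add: poly_shift_def)
qed

lemma poly_shift_mult: "poly_shift (g * h) s = poly_shift g (poly_shift h s)"
proof (induction g)
  case (pCons c g)
  have "pCons c g * h = smult c h + pCons 0 (g * h)"
    by (simp add: mult_pCons_left)
  then show ?case
    by (simp add: poly_shift_add poly_shift_smult poly_shift_pCons pCons.IH fun_eq_iff)
qed simp

lemma poly_shift_linear: "poly_shift [:- a, 1:] s = shift_diff a s"
  by (simp add: poly_shift_pCons shift_diff_def fun_eq_iff)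

lemma poly_shift_linear_power: "poly_shift ([:- a, 1:] ^ k) s = (shift_diff a ^^ k) s"
proof (induction k arbitrary: s)
  case 0
  show ?case by (simp add: poly_shift_def fun_eq_iff)
next
  case (Suc k)
  then show ?case
    by (simp only: power_Suc2 poly_shift_mult poly_shift_linear funpow_Suc_right comp_apply)
qed

lemma has_period_shift_diff: "has_period s N \<Longrightarrow> has_period (shift_diff a s) N"
  unfolding has_period_def shift_diff_def by (metis add.commute add.left_commute)

lemma shift_diff_eq_0_iff: "shift_diff a s = 0 \<longleftrightarrow> (\<forall>n. s (n + 1) = a * s n)"
  by (simp add: shift_diff_def fun_eq_iff)

lemma periodic_shift_diff_twice_eq_0D:
  fixes t :: "int \<Rightarrow> 'a::idom"
  assumes period: "has_period t N" and N: "of_nat N \<noteq> (0::'a)"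
    and twice: "shift_diff a (shift_diff a t) = 0"
  shows "shift_diff a t = 0"
proof
  fix n
  define r where "r = shift_diff a t"
  have r_step: "r (m + 1) = a * r m" for m
    using twice unfolding r_def shift_diff_eq_0_iff by blast
  have t_step: "t (m + 1) = a * t m + r m" for m
    by (simp add: r_def shift_diff_def)
  have r_iter: "r (n + int m) = a ^ m * r n" for m
  proof (induction m)
    case (Suc m)
    then show ?case using r_step[of "n + int m"] by (simp add: ac_simps)
  qed simp
  have t_iter: "a * t (n + int m) = a ^ Suc m * t n + of_nat m * a ^ m * r n" for m
  proof (induction m)
    case (Suc m)
    have "a * t (n + int (Suc m)) = a * (a * t (n + int m)) + a * a ^ m * r n"
      using t_step[of "n + int m"] r_iter[of m] by (simp add: ac_simps distrib_left)
    then show ?case using Suc by (simp add: algebra_simps)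
  qed simp
  have r_period: "a ^ N * r n = r n"
    using r_iter[of N] has_period_shift_diff[OF period] by (simp add: r_def has_period_def)
  have t_period: "a * t n = a ^ Suc N * t n + of_nat N * (a ^ N * r n)"
    using t_iter[of N] period by (simp add: has_period_def mult.assoc)
  show "shift_diff a t n = 0 n"
  proof (rule ccontr)
    assume "shift_diff a t n \<noteq> 0 n"
    then have "r n \<noteq> 0" by (simp add: r_def)
    with r_period have "a ^ N = 1" by simp
    with t_period r_period have "of_nat N * r n = 0" by simp
    with N \<open>r n \<noteq> 0\<close> show False by simp
  qed
qed

lemma periodic_shift_diff_power_eq_0D:
  fixes t :: "int \<Rightarrow> 'a::idom"
  assumes "has_period t N" and "of_nat N \<noteq> (0::'a)"
    and "(shift_diff a ^^ Suc k) t = 0"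
  shows "shift_diff a t = 0"
  using assms
proof (induction k arbitrary: t)
  case (Suc k)
  have "(shift_diff a ^^ Suc k) (shift_diff a t) = 0"
    using Suc.prems(3) by (simp only: funpow_Suc_right comp_apply)
  then have "shift_diff a (shift_diff a t) = 0"
    using Suc.IH has_period_shift_diff[OF Suc.prems(1)] Suc.prems(2) by blast
  then show ?case
    by (rule periodic_shift_diff_twice_eq_0D[OF Suc.prems(1,2)])
qed simp

lemma finite_mult_subgroup_power_card:
  assumes M: "finite_mult_subgroup M" and x: "x \<in> M"
  shows "x ^ card M = 1"
proof -
  have fin: "finite M" and "0 \<notin> M" and mult: "\<forall>y\<in>M. \<forall>z\<in>M. y * z \<in> M"
    and inv: "\<forall>y\<in>M. inverse y \<in> M"
    using M unfolding finite_mult_subgroup_def by auto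
  then have x0: "x \<noteq> 0" using x by auto
  have "bij_betw ((*) x) M M"
  proof (rule bij_betwI')
    show "z \<in> M \<Longrightarrow> \<exists>y\<in>M. z = x * y" for z
      using x0 x mult inv by (intro bexI[of _ "inverse x * z"]) auto
  qed (use x0 x mult in auto)
  then have "(\<Prod>y\<in>M. x * y) = (\<Prod>y\<in>M. y)"
    using prod.reindex_bij_betw[of "(*) x" M M "\<lambda>y. y"] by simp
  then have "x ^ card M * (\<Prod>y\<in>M. y) = (\<Prod>y\<in>M. y)"
    by (simp add: prod.distrib)
  moreover have "(\<Prod>y\<in>M. y) \<noteq> 0"
    using fin \<open>0 \<notin> M\<close> by auto
  ultimately show ?thesis by simp
qed

lemma of_nat_card_finite_mult_subgroup_neq_0:
  fixes M :: "'a::field set"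
  assumes M: "finite_mult_subgroup M"
  shows "of_nat (card M) \<noteq> (0::'a)"
proof
  assume card0: "of_nat (card M) = (0::'a)"
  have "finite M" "1 \<in> M" using M unfolding finite_mult_subgroup_def by auto
  then have "card M > 0" by (auto simp: card_gt_0_iff)
  with card0 have "CHAR('a) > 0" by (auto simp: CHAR_pos_iff)
  then have prime: "prime CHAR('a)" by (rule prime_CHAR_semidom)
  from card0 obtain m where m: "card M = CHAR('a) * m"
    by (auto simp: of_nat_eq_0_iff_char_dvd elim: dvdE)
  with \<open>card M > 0\<close> prime_gt_1_nat[OF prime] have "0 < m" "m < card M"
    by auto
  have root: "x ^ m = 1" if "x \<in> M" for x
  proof -
    have "(x ^ m - 1) ^ CHAR('a) = (x ^ m) ^ CHAR('a) + (- 1) ^ CHAR('a)"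
      using freshmans_dream[OF prime refl, of "x ^ m" "- 1"] by simp
    also have "\<dots> = 0"
      using finite_mult_subgroup_power_card[OF M that] minus_power_prime_CHAR[OF refl prime, of 1]
      by (simp add: m power_mult[symmetric] mult.commute)
    finally show ?thesis by simp
  qed
  define P :: "'a poly" where "P = monom 1 m - 1"
  have poly_P: "poly P x = x ^ m - 1" for x
    by (simp add: P_def poly_monom)
  have "P \<noteq> 0"
    using poly_P[of 0] \<open>0 < m\<close> by (auto simp: zero_power)
  have "card M \<le> card {x. poly P x = 0}"
    using root poly_P by (intro card_mono[OF poly_roots_finite[OF \<open>P \<noteq> 0\<close>]]) auto
  also have "\<dots> \<le> degree P"
    by (rule card_poly_roots_bound[OF \<open>P \<noteq> 0\<close>])
  also have "\<dots> \<le> m"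
    unfolding P_def by (rule degree_diff_le) (auto intro: degree_monom_le)
  finally show False using \<open>m < card M\<close> by simp
qed

lemma has_period_mod:
  assumes "has_period s N"
  shows "s (n mod int N) = s n"
proof -
  have "s (m + int N * q) = s m" for m q
  proof (induction q rule: int_induct[where k = 0])
    case (step1 i)
    then show ?case
      using assms[unfolded has_period_def, rule_format, of "m + int N * i"]
      by (simp add: algebra_simps)
  next
    case (step2 i)
    then show ?case
      using assms[unfolded has_period_def, rule_format, of "m + int N * (i - 1)"]
      by (simp add: algebra_simps)
  qed simp
  from this[of "n mod int N" "n div int N"] show ?thesis
    by simp
qed

lemma presents_eq_range:
  assumes "presents s M"
  shows "M = range s"
proof -
  have M: "M = s ` {0..<int (card M)}" and "card M > 0" and "has_period s (card M)"
    using assms by (auto simp: presents_def smallest_period_def)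
  have "s n \<in> s ` {0..<int (card M)}" for n
    using \<open>card M > 0\<close> has_period_mod[OF \<open>has_period s (card M)\<close>, of n]
    by (intro image_eqI[of _ s "n mod int (card M)"]) auto
  then have "range s \<subseteq> M" by (subst M) blast
  moreover have "M \<subseteq> range s" by (subst M) blast
  ultimately show ?thesis by blast
qed

lemma geometric_seq_eq_power_int:
  fixes a :: "'a::field"
  assumes "a \<noteq> 0" and step: "\<And>n. s (n + 1) = a * s n"
  shows "s n = a powi n * s 0"
proof (induction n rule: int_induct[where k = 0])
  case (step1 i)
  then show ?case using step[of i] \<open>a \<noteq> 0\<close> by (simp add: power_int_add)
next
  case (step2 i)
  then show ?case using step[of "i - 1"] \<open>a \<noteq> 0\<close> by (simp add: power_int_diff field_simps)
qed simp

lemma presents_geometric_seq_eq_powers: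
  fixes a :: "'a::field"
  assumes "presents s M" and "a \<noteq> 0" and "\<And>n. s (n + 1) = a * s n"
  shows "M = {a powi n | n. True}"
proof -
  have M: "M = range s" by (rule presents_eq_range[OF assms(1)])
  moreover have "1 \<in> M" using assms(1) by (simp add: presents_def finite_mult_subgroup_def)
  ultimately obtain j where "s j = 1" by auto
  then have "s 0 = a powi (- j)"
    using geometric_seq_eq_power_int[where s = s, OF assms(2,3), of j] \<open>a \<noteq> 0\<close>
    by (simp add: power_int_minus field_simps)
  then have power: "s n = a powi (n - j)" for n
    using geometric_seq_eq_power_int[where s = s, OF assms(2,3), of n] \<open>a \<noteq> 0\<close>
    by (simp add: power_int_add[symmetric])
  have "range s = range (power_int a)"
  proof
    show "range s \<subseteq> range (power_int a)"
      using power by auto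
    show "range (power_int a) \<subseteq> range s"
    proof (rule image_subsetI)
      fix n
      have "a powi n = s (n + j)" using power[of "n + j"] by simp
      then show "a powi n \<in> range s" by simp
    qed
  qed
  with M show ?thesis by auto
qed

lemma f_sequence_linear_power_presents_imp_geometric:
  fixes a :: "'a::field"
  assumes "f_sequence ([:- a, 1:] ^ Suc k) s" and "presents s M"
  shows "s (n + 1) = a * s n"
proof -
  have "finite_mult_subgroup M" and period: "has_period s (card M)"
    using assms(2) by (auto simp: presents_def smallest_period_def)
  moreover have "(shift_diff a ^^ Suc k) s = 0"
    using assms(1) by (simp only: f_sequence_iff_poly_shift poly_shift_linear_power)
  ultimately have "shift_diff a s = 0"
    by (intro periodic_shift_diff_power_eq_0D[OF period]
        of_nat_card_finite_mult_subgroup_neq_0)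
  then show ?thesis by (simp add: shift_diff_eq_0_iff)
qed

theorem mainTheorem6:
  fixes F :: "'a::field set" and p e k :: nat and a :: 'a
  assumes "is_subfield F" and "finite F" and "prime p" and "card F = p ^ e"
    and "a \<in> F" and "a \<noteq> 0" and "k \<ge> 1"
    and "f_subgroup ([:- a, 1:] ^ k) M"
  shows "M = {a powi n | n::int. True}
     \<and> standard_f_subgroup ([:- a, 1:] ^ k) M
     \<and> (\<forall>s. f_sequence ([:- a, 1:] ^ k) s \<and> presents s M \<longrightarrow> (\<forall>n::int. s (n + 1) = a * s n))"
proof -
  obtain j where k: "k = Suc j" using \<open>k \<ge> 1\<close> by (cases k) auto
  have geometric: "s (n + 1) = a * s n"
    if "f_sequence ([:- a, 1:] ^ k) s" and "presents s M" for s n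
    using that unfolding k by (rule f_sequence_linear_power_presents_imp_geometric)
  obtain s where s: "f_sequence ([:- a, 1:] ^ k) s" "presents s M"
    using \<open>f_subgroup ([:- a, 1:] ^ k) M\<close> by (auto simp: f_subgroup_def)
  have "M = {a powi n | n. True}"
    by (rule presents_geometric_seq_eq_powers[OF s(2) \<open>a \<noteq> 0\<close> geometric[OF s]])
  moreover have "standard_f_subgroup ([:- a, 1:] ^ k) M"
    using \<open>f_subgroup ([:- a, 1:] ^ k) M\<close> geometric
    unfolding standard_f_subgroup_def cyclic_seq_def by blast
  ultimately show ?thesis using geometric by blast
qed

end
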